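(* Let $Q$ be a probability measure on $(\Omega,\mathcal G_\infty)$ equivalent to $P$ such that the density process ${}^{\mathcal G}Z_t=\mathbb E[dQ/dP\mid\mathcal G_t]$ is $\mathbb F$-adapted. Then ${}^{o,Q}M={}^oM$, i.e. $\mathbb E^Q[M_t\mid\mathcal F_t]=\mathbb E^P[M_t\mid\mathcal F_t]$ a.s. for all $t\ge0$.
   Context: $B^1,B^2,B^3$ are independent standard Brownian motions on $(\Omega,\mathcal F,P)$ with $(B^1_0,B^2_0,B^3_0)=(1,0,0)$, and $M_t:=((B^1_t)^2+(B^2_t)^2+(B^3_t)^2)^{-1/2}$ is the inverse three-dimensional Bessel process. $\mathbb G$ is the (augmented) natural filtration of $(B^1,B^2,B^3)$ and $\mathbb F$ is the (augmented) natural filtration of $(B^1,B^2)$. ${}^{o,Q}M_t=\mathbb E^Q[M_t\mid\mathcal F_t]$ and ${}^oM={}^{o,P}M$. *)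

theory Defs
  imports "HOL-Probability.Probability"
begin

definition std_BM :: "'a measure \<Rightarrow> (real \<Rightarrow> 'a \<Rightarrow> real) \<Rightarrow> real \<Rightarrow> bool" where
  "std_BM P B x0 \<longleftrightarrow>
     (\<forall>t\<ge>0. B t \<in> borel_measurable P) \<and>
     (AE \<omega> in P. B 0 \<omega> = x0) \<and>
     (AE \<omega> in P. continuous_on {0..} (\<lambda>t. B t \<omega>)) \<and>
     (\<forall>s t. 0 \<le> s \<longrightarrow> s < t \<longrightarrow>
        distributed P lborel (\<lambda>\<omega>. B t \<omega> - B s \<omega>) (normal_density 0 (sqrt (t - s)))) \<and>
     (\<forall>(n::nat) (ts::nat \<Rightarrow> real). 0 \<le> ts 0 \<longrightarrow> (\<forall>i<n. ts i < ts (Suc i)) \<longrightarrow>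
        prob_space.indep_vars P (\<lambda>_. borel) (\<lambda>i \<omega>. B (ts (Suc i)) \<omega> - B (ts i) \<omega>) {..<n})"

text \<open>With T = {0..t} this is the time-t sigma-algebra of the
  augmented natural filtration; with T = {0..} it is the terminal sigma-algebra.\<close>
definition aug_nat_filtration ::
  "'a measure \<Rightarrow> ('i \<Rightarrow> real \<Rightarrow> 'a \<Rightarrow> real) \<Rightarrow> 'i set \<Rightarrow> real set \<Rightarrow> 'a measure" where
  "aug_nat_filtration P X I T =
     sigma (space P)
       ({X i s -` A \<inter> space P | i s A. i \<in> I \<and> s \<in> T \<and> A \<in> sets (borel :: real measure)}
        \<union> null_sets P)"

end

theory Submission
  imports Defs
begin

text \<open>Let \<open>D\<close> be the density of \<open>Q\<close> with respect to \<open>P\<close> on \<open>\<G>\<^sub>\<infinity>\<close>. For \<open>\<G>\<^sub>t\<close>-measurable \<open>g\<close> we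
  have \<open>E\<^sub>Q[g] = E\<^sub>P[Z\<^sub>t g]\<close> with \<open>Z\<^sub>t = E\<^sub>P[D | \<G>\<^sub>t]\<close>. If \<open>Z\<^sub>t\<close> is \<open>\<F>\<^sub>t\<close>-measurable, then for
  \<open>A \<in> \<F>\<^sub>t\<close> the factor \<open>Z\<^sub>t 1\<^sub>A\<close> can be pulled through \<open>E\<^sub>P[\<cdot> | \<F>\<^sub>t]\<close>, so \<open>E\<^sub>P[M\<^sub>t | \<F>\<^sub>t]\<close> has the
  same integrals as \<open>M\<^sub>t\<close> over every \<open>A \<in> \<F>\<^sub>t\<close> under \<open>Q\<close>; hence it is also \<open>E\<^sub>Q[M\<^sub>t | \<F>\<^sub>t]\<close>.
  Equivalence of \<open>P\<close> and \<open>Q\<close> turns the \<open>Q\<close>-a.s. identity into a \<open>P\<close>-a.s. one. No property of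
  Brownian motion beyond measurability enters.\<close>

lemma space_aug_nat_filtration [simp]: "space (aug_nat_filtration P X I T) = space P"
  unfolding aug_nat_filtration_def by (simp add: space_measure_of_conv)

lemma sets_aug_nat_filtration:
  "sets (aug_nat_filtration P X I T) =
     sigma_sets (space P)
       ({X i s -` A \<inter> space P | i s A. i \<in> I \<and> s \<in> T \<and> A \<in> sets (borel :: real measure)}
        \<union> null_sets P)"
  unfolding aug_nat_filtration_def using sets.sets_into_space
  by (intro sets_measure_of) auto

lemma subalgebra_aug_nat_filtration_mono:
  assumes "I \<subseteq> I'" "T \<subseteq> T'"
  shows "subalgebra (aug_nat_filtration P X I' T') (aug_nat_filtration P X I T)"
  unfolding subalgebra_def sets_aug_nat_filtration using assms
  by (simp, intro sigma_sets_mono') blast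

lemma subalgebra_aug_nat_filtration:
  assumes "\<And>i s. i \<in> I \<Longrightarrow> s \<in> T \<Longrightarrow> X i s \<in> borel_measurable P"
  shows "subalgebra P (aug_nat_filtration P X I T)"
  unfolding subalgebra_def sets_aug_nat_filtration
  using assms by (auto intro!: sets.sigma_sets_subset simp: measurable_sets)

lemma measurable_aug_nat_filtration:
  assumes "i \<in> I" "s \<in> T"
  shows "X i s \<in> borel_measurable (aug_nat_filtration P X I T)"
proof (rule measurableI)
  fix A :: "real set" assume "A \<in> sets borel"
  then show "X i s -` A \<inter> space (aug_nat_filtration P X I T) \<in> sets (aug_nat_filtration P X I T)"
    unfolding sets_aug_nat_filtration using assms by (auto intro: sigma_sets.Basic)
qed simp

lemma nn_integral_eq_cond_density:
  fixes Z g :: "'a \<Rightarrow> ennreal"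
  assumes "finite_measure P" and PH: "subalgebra P H" and HG: "subalgebra H G"
    and spQ: "space Q = space P" and setsQ: "sets Q = sets H"
    and ac: "\<forall>A\<in>sets H. emeasure P A = 0 \<longrightarrow> emeasure Q A = 0"
    and Z: "AE x in P. nn_cond_exp P G (RN_deriv (restr_to_subalg P H) Q) x = Z x"
    and g: "g \<in> borel_measurable G"
  shows "integral\<^sup>N Q g = (\<integral>\<^sup>+x. Z x * g x \<partial>P)"
proof -
  interpret P: finite_measure P by fact
  have PG: "subalgebra P G" using PH HG by (auto simp: subalgebra_def)
  interpret PG: finite_measure_subalgebra P G
    by (simp add: finite_measure_subalgebra_def finite_measure_subalgebra_axioms_def assms(1) PG)
  define R where "R = restr_to_subalg P H"
  define D where "D = RN_deriv R Q"
  interpret R: finite_measure R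
    unfolding R_def using finite_measure_restr_to_subalg[OF PH] assms(1) by blast
  have setsR: "sets R = sets H" unfolding R_def by (rule sets_restr_to_subalg[OF PH])
  have "absolutely_continuous R Q"
    unfolding absolutely_continuous_def R_def
    using null_sets_restr_to_subalg[OF PH] ac setsQ by auto
  have gH: "g \<in> borel_measurable H" using HG g by (rule measurable_from_subalg)
  have DH: "D \<in> borel_measurable H"
    unfolding D_def using borel_measurable_RN_deriv[of R Q] measurable_cong_sets[OF setsR refl] by blast
  have "integral\<^sup>N Q g = (\<integral>\<^sup>+x. D x * g x \<partial>R)"
    unfolding D_def
    by (rule R.RN_deriv_nn_integral[OF \<open>absolutely_continuous R Q\<close>])
       (use setsQ setsR gH measurable_cong_sets[OF setsR refl] in auto)
  also have "\<dots> = (\<integral>\<^sup>+x. g x * D x \<partial>P)"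
    unfolding R_def using DH gH by (subst nn_integral_subalgebra2[OF PH]) (auto simp: mult.commute)
  also have "\<dots> = (\<integral>\<^sup>+x. g x * nn_cond_exp P G D x \<partial>P)"
    by (rule PG.nn_cond_exp_intg[symmetric]) (use g DH PH in \<open>auto intro: measurable_from_subalg\<close>)
  also have "\<dots> = (\<integral>\<^sup>+x. Z x * g x \<partial>P)"
    using Z unfolding D_def R_def by (intro nn_integral_cong_AE) (auto simp: mult.commute)
  finally show ?thesis .
qed

lemma AE_nn_cond_exp_change_of_measure:
  fixes Z f :: "'a \<Rightarrow> ennreal"
  assumes "finite_measure P" and "finite_measure Q"
    and PH: "subalgebra P H" and HG: "subalgebra H G" and GF: "subalgebra G F"
    and spQ: "space Q = space P" and setsQ: "sets Q = sets H"
    and ac: "\<forall>A\<in>sets H. emeasure P A = 0 \<longrightarrow> emeasure Q A = 0"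
    and ZF: "Z \<in> borel_measurable F"
    and Z: "AE x in P. nn_cond_exp P G (RN_deriv (restr_to_subalg P H) Q) x = Z x"
    and f: "f \<in> borel_measurable G"
  shows "AE x in Q. nn_cond_exp P F f x = nn_cond_exp Q F f x"
proof -
  note density = nn_integral_eq_cond_density[OF assms(1) PH HG spQ setsQ ac Z]
  interpret Q: finite_measure Q by fact
  have PF: "subalgebra P F" using PH HG GF by (auto simp: subalgebra_def)
  interpret PF: finite_measure_subalgebra P F
    by (simp add: finite_measure_subalgebra_def finite_measure_subalgebra_axioms_def assms(1) PF)
  have QF: "subalgebra Q F" using HG GF spQ setsQ PH by (auto simp: subalgebra_def)
  interpret QF: finite_measure_subalgebra Q F
    by (simp add: finite_measure_subalgebra_def finite_measure_subalgebra_axioms_def assms(2) QF)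
  define h where "h = nn_cond_exp P F f"
  have hF: "h \<in> borel_measurable F" unfolding h_def by simp
  have hG: "h \<in> borel_measurable G" using GF hF by (rule measurable_from_subalg)
  have FG: "sets F \<subseteq> sets G" using GF by (simp add: subalgebra_def)
  have fP: "f \<in> borel_measurable P" using f PH HG measurable_from_subalg by blast
  show ?thesis
    unfolding h_def[symmetric]
  proof (rule QF.nn_cond_exp_charact)
    fix A assume A: "A \<in> sets F"
    then have AG: "A \<in> sets G" using FG by auto
    have "(\<integral>\<^sup>+x\<in>A. f x \<partial>Q) = (\<integral>\<^sup>+x. (Z x * indicator A x) * f x \<partial>P)"
      by (subst density) (use f AG in \<open>measurable, simp add: mult_ac\<close>)
    also have "\<dots> = (\<integral>\<^sup>+x. (Z x * indicator A x) * h x \<partial>P)"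
      unfolding h_def by (rule PF.nn_cond_exp_intg[symmetric]) (use ZF A fP in measurable)
    also have "\<dots> = (\<integral>\<^sup>+x\<in>A. h x \<partial>Q)"
      by (subst density) (use hG AG in \<open>measurable, simp add: mult_ac\<close>)
    finally show "(\<integral>\<^sup>+x\<in>A. f x \<partial>Q) = (\<integral>\<^sup>+x\<in>A. h x \<partial>Q)" .
  next
    show "f \<in> borel_measurable Q"
      using measurable_from_subalg[OF HG f] measurable_cong_sets[OF setsQ refl] by blast
  qed (fact hF)
qed

lemma AE_transfer_via_null_sets:
  assumes PH: "subalgebra P H" and spQ: "space Q = space P" and setsQ: "sets Q = sets H"
    and ac: "\<forall>A\<in>sets H. emeasure Q A = 0 \<longrightarrow> emeasure P A = 0"
    and AE: "AE x in Q. R x" and R: "{x\<in>space P. \<not> R x} \<in> sets H"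
  shows "AE x in P. R x"
proof -
  have "emeasure Q {x\<in>space P. \<not> R x} = 0"
    using AE R setsQ spQ by (simp add: AE_iff_measurable)
  then have "emeasure P {x\<in>space P. \<not> R x} = 0" using ac R by blast
  moreover have "{x\<in>space P. \<not> R x} \<in> sets P" using R PH by (auto simp: subalgebra_def)
  ultimately show ?thesis by (intro AE_I[where N="{x\<in>space P. \<not> R x}"]) auto
qed

lemma AE_nn_cond_exp_eq_of_adapted_density:
  fixes Z f :: "'a \<Rightarrow> ennreal"
  assumes "prob_space P" and "prob_space Q"
    and PH: "subalgebra P H" and HG: "subalgebra H G" and GF: "subalgebra G F"
    and spQ: "space Q = space P" and setsQ: "sets Q = sets H"
    and equiv: "\<forall>A\<in>sets H. emeasure Q A = 0 \<longleftrightarrow> emeasure P A = 0"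
    and ZF: "Z \<in> borel_measurable F"
    and Z: "AE x in P. nn_cond_exp P G (RN_deriv (restr_to_subalg P H) Q) x = Z x"
    and f: "f \<in> borel_measurable G"
  shows "AE x in P. nn_cond_exp Q F f x = nn_cond_exp P F f x"
proof (rule AE_transfer_via_null_sets[OF PH spQ setsQ])
  have "finite_measure P" "finite_measure Q"
    using assms(1,2) unfolding prob_space_def by blast+
  with AE_nn_cond_exp_change_of_measure[OF _ _ PH HG GF spQ setsQ _ ZF Z f] equiv
  show "AE x in Q. nn_cond_exp Q F f x = nn_cond_exp P F f x"
    by (auto elim: AE_mp)
  have "{x\<in>space F. nn_cond_exp Q F f x \<noteq> nn_cond_exp P F f x} \<in> sets F"
    by measurable
  with PH HG GF show "{x\<in>space P. nn_cond_exp Q F f x \<noteq> nn_cond_exp P F f x} \<in> sets H"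
    by (auto simp: subalgebra_def)
qed (use equiv in blast)

theorem mainTheorem8:
  fixes P Q :: "'a measure" and B1 B2 B3 :: "real \<Rightarrow> 'a \<Rightarrow> real"
  defines "G \<equiv> (\<lambda>t. aug_nat_filtration P (\<lambda>i::nat. if i = 1 then B1 else if i = 2 then B2 else B3) {1,2,3} {0..t})"
    and "F \<equiv> (\<lambda>t. aug_nat_filtration P (\<lambda>i::nat. if i = 1 then B1 else if i = 2 then B2 else B3) {1,2} {0..t})"
    and "M \<equiv> (\<lambda>t \<omega>. 1 / sqrt ((B1 t \<omega>)\<^sup>2 + (B2 t \<omega>)\<^sup>2 + (B3 t \<omega>)\<^sup>2))"
  assumes "prob_space P"
    and "std_BM P B1 1" and "std_BM P B2 0" and "std_BM P B3 0"
    and "prob_space.indep_vars P (\<lambda>_. PiM {0..} (\<lambda>_. (borel :: real measure)))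
           (\<lambda>i \<omega>. \<lambda>t\<in>{0..}. (\<lambda>i::nat. if i = 1 then B1 else if i = 2 then B2 else B3) i t \<omega>) {1,2,3}"
    and "prob_space Q" and "space Q = space P" and "sets Q = sets (aug_nat_filtration P (\<lambda>i::nat. if i = 1 then B1 else if i = 2 then B2 else B3) {1,2,3} {0..})"
    and "\<forall>A\<in>sets (aug_nat_filtration P (\<lambda>i::nat. if i = 1 then B1 else if i = 2 then B2 else B3) {1,2,3} {0..}). emeasure Q A = 0 \<longleftrightarrow> emeasure P A = 0"
    and "\<forall>t\<ge>0. \<exists>Z. Z \<in> borel_measurable (F t) \<and>
           (AE \<omega> in P. nn_cond_exp P (G t) (RN_deriv (restr_to_subalg P (aug_nat_filtration P (\<lambda>i::nat. if i = 1 then B1 else if i = 2 then B2 else B3) {1,2,3} {0..})) Q) \<omega> = Z \<omega>)"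
  shows "\<forall>t\<ge>0. AE \<omega> in P.
           nn_cond_exp Q (F t) (\<lambda>\<omega>. ennreal (M t \<omega>)) \<omega> = nn_cond_exp P (F t) (\<lambda>\<omega>. ennreal (M t \<omega>)) \<omega>"
proof (intro allI impI)
  fix t :: real assume "t \<ge> 0"
  define X where "X = (\<lambda>i::nat. if i = 1 then B1 else if i = 2 then B2 else B3)"
  define H where "H = aug_nat_filtration P X {1,2,3} {0..}"
  have PH: "subalgebra P H"
    unfolding H_def using assms(5-7) by (intro subalgebra_aug_nat_filtration) (auto simp: std_BM_def X_def)
  have HG: "subalgebra H (G t)" and GF: "subalgebra (G t) (F t)"
    unfolding H_def G_def F_def X_def[symmetric] by (auto intro!: subalgebra_aug_nat_filtration_mono)
  obtain Z where Z: "Z \<in> borel_measurable (F t)"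
    "AE \<omega> in P. nn_cond_exp P (G t) (RN_deriv (restr_to_subalg P H) Q) \<omega> = Z \<omega>"
    using assms(13) \<open>t \<ge> 0\<close> unfolding H_def X_def by blast
  have G_meas: "X i t \<in> borel_measurable (G t)" if "i \<in> {1,2,3}" for i
    unfolding G_def X_def[symmetric] using that \<open>t \<ge> 0\<close> by (intro measurable_aug_nat_filtration) auto
  have [measurable]: "B1 t \<in> borel_measurable (G t)" "B2 t \<in> borel_measurable (G t)"
      "B3 t \<in> borel_measurable (G t)"
    using G_meas[of 1] G_meas[of 2] G_meas[of 3] by (simp_all add: X_def)
  then have "(\<lambda>\<omega>. ennreal (M t \<omega>)) \<in> borel_measurable (G t)"
    unfolding M_def by measurable
  moreover have "sets Q = sets H" "\<forall>A\<in>sets H. emeasure Q A = 0 \<longleftrightarrow> emeasure P A = 0"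
    using assms(11,12) unfolding H_def X_def by simp_all
  ultimately show "AE \<omega> in P. nn_cond_exp Q (F t) (\<lambda>\<omega>. ennreal (M t \<omega>)) \<omega> = nn_cond_exp P (F t) (\<lambda>\<omega>. ennreal (M t \<omega>)) \<omega>"
    using AE_nn_cond_exp_eq_of_adapted_density[OF assms(4,9) PH HG GF assms(10) _ _ Z] by blast
qed

end
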